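(* Let $t\ge 1$ and let $S=\{s_0,s_1,\ldots,s_t\}\subseteq BS^{+}(1,3)$ with $s_0=a^{x_0}$ and $s_i=b^{m_i}a^{x_i}$ for $1\le i\le t$, where $x_0,x_1,\dots,x_t\in\mathbb Z$ and $0<m_1<m_2<\cdots<m_t$ are integers; thus $k=|S|=t+1\ge 2$ and $S$ meets each coset $b^{m}a^{\mathbb Z}$ in at most one element. Suppose that $S$ is non-abelian and that the subgroup generated by $T=S\setminus\{s_0\}$ is abelian. Then $|S^2|\geq 4k-4$.
   Context: $BS(1,3)=\langle a,b\mid ab=ba^3\rangle$; $BS^{+}(1,3)=\{b^m a^x: m\in\mathbb{Z}_{\ge 0},\ x\in\mathbb{Z}\}$, with $(b^m a^x)(b^n a^y)=b^{m+n}a^{y+3^n x}$. $S^2=\{st: s,t\in S\}$. A set is non-abelian if the subgroup it generates is non-abelian. *)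

theory Defs
  imports Complex_Main "HOL-Algebra.Generated_Groups"
begin

text \<open>Model of BS(1,3) = <a,b | ab = ba^3> as the semidirect product Z[1/3] x| Z:
  the element b^m a^x (m in Z, x in Z[1/3]) is the pair (m, x), and
  (b^m a^x)(b^n a^y) = b^(m+n) a^(y + 3^n x).  This is the standard faithful
  representation of BS(1,3).\<close>

definition BS13 :: "(int \<times> rat) monoid" where
  "BS13 = \<lparr> carrier = {(m, x). \<exists>j::nat. x * 3 ^ j \<in> \<int>},
            mult = (\<lambda>(m, x) (n, y). (m + n, y + (3::rat) powi n * x)),
            one = (0, 0) \<rparr>"

definition bsp :: "nat \<Rightarrow> int \<Rightarrow> int \<times> rat" where
  "bsp m x = (int m, of_int x)"

definition setsq :: "(int \<times> rat) set \<Rightarrow> (int \<times> rat) set" where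
  "setsq S = {s \<otimes>\<^bsub>BS13\<^esub> t | s t. s \<in> S \<and> t \<in> S}"

definition abelian_set :: "(int \<times> rat) set \<Rightarrow> bool" where
  "abelian_set S = (\<forall>g\<in>generate BS13 S. \<forall>h\<in>generate BS13 S.
        g \<otimes>\<^bsub>BS13\<^esub> h = h \<otimes>\<^bsub>BS13\<^esub> g)"

end

theory Submission
  imports Defs
begin

text \<open>Elements of positive \<open>b\<close>-exponent that commute with a fixed \<open>b\<^sup>n a\<^sup>z\<close>, \<open>n > 0\<close>,
  lie in one conjugate \<open>a\<^sup>c \<langle>b\<rangle> a\<^sup>-\<^sup>c\<close>. Hence \<open>T\<close> lies in such a conjugate, and
  \<open>x\<^sub>0 \<noteq> 0\<close> since otherwise \<open>s\<^sub>0\<close> would lie in it too and \<open>S\<close> would be abelian. A conjugate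
  of \<open>\<langle>b\<rangle>\<close> contains one point per \<open>b\<close>-exponent, so \<open>|T\<^sup>2|\<close> is the size of the sumset
  \<open>M + M\<close> of the exponents \<open>M = {m\<^sub>1, \<dots>, m\<^sub>t}\<close>, which is at least \<open>2t - 1\<close>. The
  products \<open>s\<^sub>0 s\<close> and \<open>s s\<^sub>0\<close> (\<open>s \<in> T\<close>) are \<open>2t\<close> further distinct points off the conjugate,
  and \<open>s\<^sub>0\<^sup>2\<close> is the only product of exponent \<open>0\<close>: altogether \<open>1 + 2t + (2t - 1) = 4k - 4\<close>.\<close>

lemma finite_sumset: "finite M \<Longrightarrow> finite {a + b | a b. a \<in> M \<and> b \<in> M}"
proof -
  assume "finite M"
  have "{a + b | a b. a \<in> M \<and> b \<in> M} = (\<lambda>(a, b). a + b) ` (M \<times> M)" by auto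
  then show ?thesis using \<open>finite M\<close> by simp
qed

lemma card_sumset_ge:
  fixes M :: "'a::linordered_cancel_ab_semigroup_add set"
  assumes "finite M"
  shows "2 * card M - 1 \<le> card {a + b | a b. a \<in> M \<and> b \<in> M}"
  using assms
proof (induction M rule: finite_linorder_max_induct)
  case empty
  then show ?case by simp
next
  case (insert b A)
  let ?sums = "\<lambda>M. {a + b | a b. a \<in> M \<and> b \<in> (M::'a set)}"
  show ?case
  proof (cases "A = {}")
    case True
    then show ?thesis by simp
  next
    case False
    define a where "a = Max A"
    have "a \<in> A" using False insert(1) by (simp add: a_def)
    then have "a < b" using insert(2) by blast
    have small: "u < a + b" if u: "u \<in> ?sums A" for u
    proof -
      obtain p q where "u = p + q" "p \<in> A" "q \<in> A" using u by blast
      then have "p \<le> a" "q < b" using insert(1,2) by (simp_all add: a_def)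
      then show ?thesis using \<open>u = p + q\<close> by (simp add: add_le_less_mono)
    qed
    have "a + b < b + b" using \<open>a < b\<close> by simp
    have new: "a + b \<notin> ?sums A" "b + b \<notin> ?sums A" "a + b \<noteq> b + b"
    proof -
      show "a + b \<notin> ?sums A" using small[of "a + b"] by (meson order_less_irrefl)
      show "b + b \<notin> ?sums A" using small[of "b + b"] \<open>a + b < b + b\<close> by (meson order_less_asym)
      show "a + b \<noteq> b + b" using \<open>a + b < b + b\<close> by (rule less_imp_neq)
    qed
    have sub: "insert (a + b) (insert (b + b) (?sums A)) \<subseteq> ?sums (insert b A)"
      using \<open>a \<in> A\<close> by blast
    have fin: "finite (?sums A)" using insert(1) by (rule finite_sumset)
    have "a + b \<notin> insert (b + b) (?sums A)" using new(1,3) by blast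
    then have "card (insert (a + b) (insert (b + b) (?sums A))) = Suc (Suc (card (?sums A)))"
      using card_insert_disjoint[OF fin new(2)] card_insert_disjoint[OF finite.insertI[OF fin]]
      by presburger
    moreover have "card (insert (a + b) (insert (b + b) (?sums A))) \<le> card (?sums (insert b A))"
      by (rule card_mono[OF finite_sumset[OF finite.insertI[OF insert(1)]] sub])
    moreover have "card (insert b A) = Suc (card A)"
      using insert(2) by (intro card_insert_disjoint[OF insert(1)]) blast
    moreover have "card A \<ge> 1"
      using False insert(1) by (simp add: Suc_le_eq card_gt_0_iff)
    ultimately show ?thesis
      using insert.IH by linarith
  qed
qed

lemma mult_pair: "(p, u) \<otimes>\<^bsub>BS13\<^esub> (q, v) = (p + q, v + 3 powi q * u)"
  by (simp add: BS13_def)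

lemma fst_mult: "fst (g \<otimes>\<^bsub>BS13\<^esub> h) = fst g + fst h"
  by (cases g, cases h) (simp add: mult_pair)

lemma mult_bsp: "bsp n z \<otimes>\<^bsub>BS13\<^esub> bsp n' z' = (int n + int n', of_int z' + 3 ^ n' * of_int z)"
  by (simp add: bsp_def mult_pair)

lemma inv_bsp: "inv\<^bsub>BS13\<^esub> (bsp n z) = (- int n, - of_int z / 3 ^ n)"
  unfolding m_inv_def
proof (rule the_equality)
  have "(- of_int z / 3 ^ n) * 3 ^ n \<in> (\<int> :: rat set)" by simp
  then have "\<exists>j::nat. (- of_int z / 3 ^ n) * 3 ^ j \<in> (\<int> :: rat set)" by blast
  then have "(- int n, - of_int z / 3 ^ n) \<in> carrier BS13"
    unfolding BS13_def by simp
  then show "(- int n, - of_int z / 3 ^ n) \<in> carrier BS13 \<and>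
      bsp n z \<otimes>\<^bsub>BS13\<^esub> (- int n, - of_int z / 3 ^ n) = \<one>\<^bsub>BS13\<^esub> \<and>
      (- int n, - of_int z / 3 ^ n) \<otimes>\<^bsub>BS13\<^esub> bsp n z = \<one>\<^bsub>BS13\<^esub>"
    by (simp add: BS13_def bsp_def power_int_minus inverse_eq_divide)
next
  fix g
  assume "g \<in> carrier BS13 \<and> bsp n z \<otimes>\<^bsub>BS13\<^esub> g = \<one>\<^bsub>BS13\<^esub> \<and>
      g \<otimes>\<^bsub>BS13\<^esub> bsp n z = \<one>\<^bsub>BS13\<^esub>"
  moreover obtain q v where g: "g = (q, v)" by force
  ultimately have "q = - int n" "v + 3 powi q * of_int z = 0"
    by (auto simp: BS13_def bsp_def)
  then show "g = (- int n, - of_int z / 3 ^ n)"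
    by (auto simp: g power_int_minus inverse_eq_divide algebra_simps)
qed

lemma commute_bsp_iff:
  "bsp n z \<otimes>\<^bsub>BS13\<^esub> bsp n' z' = bsp n' z' \<otimes>\<^bsub>BS13\<^esub> bsp n z \<longleftrightarrow>
    of_int z' * ((3::rat) ^ n - 1) = of_int z * (3 ^ n' - 1)"
  by (auto simp: mult_bsp algebra_simps)

text \<open>The cyclic subgroup \<open>a\<^sup>c \<langle>b\<rangle> a\<^sup>-\<^sup>c\<close>: conjugating \<open>b\<^sup>p\<close> by \<open>a\<^sup>c\<close> gives \<open>(p, c (3\<^sup>p - 1))\<close>.\<close>

definition conj_b_subgroup :: "rat \<Rightarrow> (int \<times> rat) set" where
  "conj_b_subgroup c = {(p, c * (3 powi p - 1)) | p. True}"

lemma mem_conj_b_subgroup_iff: "(p, v) \<in> conj_b_subgroup c \<longleftrightarrow> v = c * (3 powi p - 1)"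
  by (auto simp: conj_b_subgroup_def)

lemma bsp_mem_conj_b_subgroup_iff:
  "bsp n z \<in> conj_b_subgroup c \<longleftrightarrow> of_int z = c * (3 ^ n - 1)"
  by (simp add: bsp_def mem_conj_b_subgroup_iff)

lemma inj_on_fst_conj_b_subgroup: "inj_on fst (conj_b_subgroup c)"
  by (auto intro!: inj_onI simp: conj_b_subgroup_def)

lemma mult_conj_b_subgroup:
  "(p, c * (3 powi p - 1)) \<otimes>\<^bsub>BS13\<^esub> (q, c * (3 powi q - 1)) = (p + q, c * (3 powi (p + q) - 1))"
  by (simp add: mult_pair power_int_add algebra_simps)

lemma conj_b_subgroup_mult_closed:
  "g \<in> conj_b_subgroup c \<Longrightarrow> h \<in> conj_b_subgroup c \<Longrightarrow> g \<otimes>\<^bsub>BS13\<^esub> h \<in> conj_b_subgroup c"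
  by (auto simp: conj_b_subgroup_def mult_conj_b_subgroup)

lemma conj_b_subgroup_commute:
  "g \<in> conj_b_subgroup c \<Longrightarrow> h \<in> conj_b_subgroup c \<Longrightarrow> g \<otimes>\<^bsub>BS13\<^esub> h = h \<otimes>\<^bsub>BS13\<^esub> g"
  by (auto simp: conj_b_subgroup_def mult_conj_b_subgroup add.commute)

lemma generate_subset_conj_b_subgroup:
  assumes "S \<subseteq> conj_b_subgroup c" and "S \<subseteq> range (\<lambda>(n, z). bsp n z)"
  shows "generate BS13 S \<subseteq> conj_b_subgroup c"
proof
  fix g assume "g \<in> generate BS13 S"
  then show "g \<in> conj_b_subgroup c"
  proof induction
    case one
    show ?case by (simp add: BS13_def mem_conj_b_subgroup_iff)
  next
    case (incl h)
    then show ?case using assms(1) by blast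
  next
    case (inv h)
    then obtain n z where h: "h = bsp n z" using assms(2) by auto
    then have "bsp n z \<in> conj_b_subgroup c" using inv assms(1) by blast
    then have z: "of_int z = c * (3 ^ n - 1)" by (simp only: bsp_mem_conj_b_subgroup_iff)
    have "- of_int z / 3 ^ n = c * (3 powi (- int n) - 1)"
      unfolding z by (simp add: power_int_minus field_simps)
    then show ?case by (simp add: h inv_bsp mem_conj_b_subgroup_iff)
  next
    case (eng h h')
    then show ?case by (blast intro: conj_b_subgroup_mult_closed)
  qed
qed

lemma abelian_set_if_subset_conj_b_subgroup:
  assumes "S \<subseteq> conj_b_subgroup c" and "S \<subseteq> range (\<lambda>(n, z). bsp n z)"
  shows "abelian_set S"
  unfolding abelian_set_def
proof (intro ballI)
  fix g h assume "g \<in> generate BS13 S" "h \<in> generate BS13 S"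
  with generate_subset_conj_b_subgroup[OF assms] show "g \<otimes>\<^bsub>BS13\<^esub> h = h \<otimes>\<^bsub>BS13\<^esub> g"
    by (intro conj_b_subgroup_commute) auto
qed

lemma abelian_set_subset_conj_b_subgroup:
  assumes "abelian_set T" and pos: "\<And>s. s \<in> T \<Longrightarrow> \<exists>n z. 0 < n \<and> s = bsp n z"
  obtains c where "T \<subseteq> conj_b_subgroup c"
proof (cases "T = {}")
  case True
  then show thesis using that[of 0] by blast
next
  case False
  then obtain n z where s: "bsp n z \<in> T" "0 < n" using pos by blast
  have "(1::rat) < 3 ^ n" using \<open>0 < n\<close> by (simp add: one_less_power)
  then have ne: "3 ^ n - 1 \<noteq> (0::rat)" by simp
  have "s \<in> conj_b_subgroup (of_int z / (3 ^ n - 1))" if "s \<in> T" for s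
  proof -
    obtain n' z' where s': "s = bsp n' z'" using pos \<open>s \<in> T\<close> by blast
    have "bsp n z \<otimes>\<^bsub>BS13\<^esub> s = s \<otimes>\<^bsub>BS13\<^esub> bsp n z"
      using assms(1) s(1) \<open>s \<in> T\<close> unfolding abelian_set_def by (blast intro: generate.incl)
    then have "of_int z' * (3 ^ n - 1) = of_int z * ((3::rat) ^ n' - 1)"
      unfolding s' commute_bsp_iff .
    then have "of_int z' = of_int z / (3 ^ n - 1) * ((3::rat) ^ n' - 1)"
      using ne by (simp add: field_simps)
    then show ?thesis by (simp add: s' bsp_mem_conj_b_subgroup_iff)
  qed
  then show thesis using that by blast
qed

lemma bsp_zero_mult_notin_conj_b_subgroup:
  assumes "u \<noteq> 0" and "bsp n z \<in> conj_b_subgroup c"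
  shows "bsp 0 u \<otimes>\<^bsub>BS13\<^esub> bsp n z \<notin> conj_b_subgroup c"
    and "bsp n z \<otimes>\<^bsub>BS13\<^esub> bsp 0 u \<notin> conj_b_subgroup c"
  using assms by (simp_all add: mult_bsp bsp_mem_conj_b_subgroup_iff mem_conj_b_subgroup_iff)

lemma bsp_zero_commute_iff:
  "bsp 0 u \<otimes>\<^bsub>BS13\<^esub> bsp n z = bsp n z \<otimes>\<^bsub>BS13\<^esub> bsp 0 u \<longleftrightarrow> u = 0 \<or> n = 0"
proof -
  have "(3::rat) ^ n = 1 \<longleftrightarrow> n = 0" using power_inject_exp[of "3::rat" n 0] by simp
  then show ?thesis by (simp add: commute_bsp_iff)
qed

lemma fst_setsq: "fst ` setsq T = {a + b | a b. a \<in> fst ` T \<and> b \<in> fst ` T}"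
proof -
  have "fst ` setsq T = {fst g + fst h | g h. g \<in> T \<and> h \<in> T}"
    unfolding setsq_def by (force simp: fst_mult)
  then show ?thesis by blast
qed

lemma finite_setsq: "finite T \<Longrightarrow> finite (setsq T)"
proof -
  assume "finite T"
  have "setsq T = (\<lambda>(g, h). g \<otimes>\<^bsub>BS13\<^esub> h) ` (T \<times> T)" unfolding setsq_def by auto
  then show ?thesis using \<open>finite T\<close> by simp
qed

lemma card_setsq_conj_b_subgroup_ge:
  assumes "finite T" and "T \<subseteq> conj_b_subgroup c"
  shows "2 * card T - 1 \<le> card (setsq T)"
proof -
  have "setsq T \<subseteq> conj_b_subgroup c"
    using assms(2) conj_b_subgroup_mult_closed unfolding setsq_def by blast
  then have "card (setsq T) = card (fst ` setsq T)"
    using inj_on_fst_conj_b_subgroup by (metis card_image inj_on_subset)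
  moreover have "card (fst ` T) = card T"
    using assms(2) inj_on_fst_conj_b_subgroup by (metis card_image inj_on_subset)
  ultimately show ?thesis
    using card_sumset_ge[of "fst ` T"] assms(1) by (simp add: fst_setsq)
qed

lemma card_setsq_insert_ge:
  assumes "finite T" and T: "T \<subseteq> conj_b_subgroup c"
    and pos: "\<And>s. s \<in> T \<Longrightarrow> \<exists>n z. 0 < n \<and> s = bsp n z" and "u \<noteq> 0"
  shows "4 * card T \<le> card (setsq (insert (bsp 0 u) T))"
proof -
  let ?s0 = "bsp 0 u"
  define L where "L = (\<lambda>s. ?s0 \<otimes>\<^bsub>BS13\<^esub> s) ` T"
  define R where "R = (\<lambda>s. s \<otimes>\<^bsub>BS13\<^esub> ?s0) ` T"
  have fst_L: "fst (?s0 \<otimes>\<^bsub>BS13\<^esub> s) = fst s" and fst_R: "fst (s \<otimes>\<^bsub>BS13\<^esub> ?s0) = fst s" for s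
    by (simp_all add: fst_mult bsp_def)
  have inj_T: "inj_on fst T"
    using T inj_on_fst_conj_b_subgroup by (rule inj_on_subset[rotated])
  have "L \<inter> R = {}"
  proof (intro equals0I)
    fix g assume "g \<in> L \<inter> R"
    then obtain s s' where s: "s \<in> T" "s' \<in> T" "g = ?s0 \<otimes>\<^bsub>BS13\<^esub> s" "g = s' \<otimes>\<^bsub>BS13\<^esub> ?s0"
      unfolding L_def R_def by blast
    then have "s = s'" using fst_L fst_R inj_T by (metis inj_onD)
    then have "?s0 \<otimes>\<^bsub>BS13\<^esub> s = s \<otimes>\<^bsub>BS13\<^esub> ?s0" using s by simp
    moreover obtain n z where "0 < n" "s = bsp n z" using pos[OF \<open>s \<in> T\<close>] by blast
    ultimately show False using \<open>u \<noteq> 0\<close> by (simp add: bsp_zero_commute_iff)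
  qed
  moreover have "(L \<union> R) \<inter> setsq T = {}"
  proof -
    have "setsq T \<subseteq> conj_b_subgroup c"
      using T conj_b_subgroup_mult_closed unfolding setsq_def by blast
    moreover have "(L \<union> R) \<inter> conj_b_subgroup c = {}"
      using T pos \<open>u \<noteq> 0\<close> bsp_zero_mult_notin_conj_b_subgroup
      unfolding L_def R_def by blast
    ultimately show ?thesis by blast
  qed
  moreover have "?s0 \<otimes>\<^bsub>BS13\<^esub> ?s0 \<notin> L \<union> R \<union> setsq T"
  proof -
    have pos_fst: "0 < fst s" if "s \<in> T" for s
      using pos[OF that] by (auto simp: bsp_def)
    have "0 < fst g" if "g \<in> L \<union> R \<union> setsq T" for g
    proof -
      obtain s s' where "s \<in> T" "s' \<in> T" "fst g = fst s \<or> fst g = fst s + fst s'"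
        using \<open>g \<in> L \<union> R \<union> setsq T\<close> fst_L fst_R fst_mult
        unfolding L_def R_def setsq_def by blast
      then show ?thesis using pos_fst by (metis add_pos_pos)
    qed
    moreover have "fst (?s0 \<otimes>\<^bsub>BS13\<^esub> ?s0) = 0" by (simp add: fst_mult bsp_def)
    ultimately show ?thesis by (metis less_irrefl)
  qed
  moreover have "card L = card T"
    unfolding L_def by (rule card_image, rule inj_onI) (metis fst_L inj_T inj_onD)
  moreover have "card R = card T"
    unfolding R_def by (rule card_image, rule inj_onI) (metis fst_R inj_T inj_onD)
  moreover have "finite L" "finite R" "finite (setsq T)"
    using \<open>finite T\<close> by (simp_all add: L_def R_def finite_setsq)
  ultimately have "card (insert (?s0 \<otimes>\<^bsub>BS13\<^esub> ?s0) (L \<union> R \<union> setsq T)) = 1 + 2 * card T + card (setsq T)"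
    by (simp add: card_Un_disjoint)
  moreover have "insert (?s0 \<otimes>\<^bsub>BS13\<^esub> ?s0) (L \<union> R \<union> setsq T) \<subseteq> setsq (insert ?s0 T)"
    unfolding L_def R_def setsq_def by blast
  ultimately have "1 + 2 * card T + card (setsq T) \<le> card (setsq (insert ?s0 T))"
    using card_mono[OF finite_setsq] \<open>finite T\<close> by (metis finite_insert)
  then show ?thesis
    using card_setsq_conj_b_subgroup_ge[OF assms(1,2)] by linarith
qed

theorem lemma2p3:
  fixes t :: nat and x :: "nat \<Rightarrow> int" and m :: "nat \<Rightarrow> nat" and S :: "(int \<times> rat) set"
  assumes "t \<ge> 1"
    and "0 < m 1"
    and "\<And>i j. 1 \<le> i \<Longrightarrow> i < j \<Longrightarrow> j \<le> t \<Longrightarrow> m i < m j"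
    and "S = insert (bsp 0 (x 0)) ((\<lambda>i. bsp (m i) (x i)) ` {1..t})"
    and "\<not> abelian_set S"
    and "abelian_set (S - {bsp 0 (x 0)})"
  shows "card (setsq S) \<ge> 4 * card S - 4"
proof -
  define T where "T = (\<lambda>i. bsp (m i) (x i)) ` {1..t}"
  have "0 < m i" if "i \<in> {1..t}" for i
    using assms(2) assms(3)[of 1 i] that by (cases "i = 1") auto
  then have pos: "\<exists>n z. 0 < n \<and> s = bsp n z" if "s \<in> T" for s
    using that unfolding T_def by blast
  have "bsp 0 (x 0) \<notin> T"
    using pos by (fastforce simp: bsp_def)
  then have S: "S = insert (bsp 0 (x 0)) T" "S - {bsp 0 (x 0)} = T"
    using assms(4) by (auto simp: T_def)
  have "abelian_set T" using assms(6) S(2) by simp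
  then obtain c where T_c: "T \<subseteq> conj_b_subgroup c"
    using abelian_set_subset_conj_b_subgroup pos by metis
  have "x 0 \<noteq> 0"
  proof
    assume "x 0 = 0"
    then have "S \<subseteq> conj_b_subgroup c"
      using T_c by (simp add: S bsp_mem_conj_b_subgroup_iff)
    moreover have "S \<subseteq> range (\<lambda>(n, z). bsp n z)"
      using pos unfolding S(1) by force
    ultimately show False
      using assms(5) abelian_set_if_subset_conj_b_subgroup by blast
  qed
  moreover have "finite T" by (simp add: T_def)
  ultimately have "4 * card T \<le> card (setsq S)"
    using card_setsq_insert_ge[OF \<open>finite T\<close> T_c pos] unfolding S(1) by blast
  then show ?thesis
    using \<open>finite T\<close> \<open>bsp 0 (x 0) \<notin> T\<close> by (simp add: S(1))
qed

end
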